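(* Let $r\ge 3$ be an integer. Every $\mathrm{T}_r$-free $r$-graph $\mathcal{H}$ with $\delta_{r-1}^{+}(\mathcal{H})\ge r$ is $\Sigma_r$-free; that is, there are no three edges $A,B,C\in\mathcal{H}$ with $|A\cap B|=r-1$ and $A\triangle B\subseteq C$.
   Context: An $r$-graph $\mathcal{H}$ is a collection of $r$-subsets (edges) of a finite vertex set $V(\mathcal{H})$. The shadow is $\partial\mathcal{H}=\{e\in\binom{V(\mathcal{H})}{r-1}\colon e\subseteq E \text{ for some } E\in\mathcal{H}\}$. For $e\in\partial\mathcal{H}$, $N_{\mathcal{H}}(e)=\{v\in V(\mathcal{H})\colon e\cup\{v\}\in\mathcal{H}\}$. The minimum positive codegree is $\delta_{r-1}^{+}(\mathcal{H})=\min\{|N_{\mathcal{H}}(e)|\colon e\in\partial\mathcal{H}\}$. The $r$-uniform generalized triangle is $\mathrm{T}_r=\{\{1,\ldots,r-1,r\},\{1,\ldots,r-1,r+1\},\{r,r+1,\ldots,2r-1\}\}$; $\mathcal{H}$ is $\mathrm{T}_r$-free if it contains no subhypergraph isomorphic to $\mathrm{T}_r$. $\Sigma_r$ denotes the family of $r$-graphs consisting of three edges $A,B,C$ with $|A\cap B|=r-1$ and $A\triangle B\subseteq C$ (symmetric difference). *)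

theory Defs
  imports Main
begin

definition r_graph :: "nat \<Rightarrow> 'a set \<Rightarrow> 'a set set \<Rightarrow> bool" where
  "r_graph r V H \<longleftrightarrow> finite V \<and> (\<forall>E\<in>H. E \<subseteq> V \<and> card E = r)"

definition shadow :: "nat \<Rightarrow> 'a set set \<Rightarrow> 'a set set" where
  "shadow r H = {e. card e = r - 1 \<and> (\<exists>E\<in>H. e \<subseteq> E)}"

definition nbhd :: "'a set \<Rightarrow> 'a set set \<Rightarrow> 'a set \<Rightarrow> 'a set" where
  "nbhd V H e = {v \<in> V. insert v e \<in> H}"

definition min_pos_codegree :: "nat \<Rightarrow> 'a set \<Rightarrow> 'a set set \<Rightarrow> nat" where
  "min_pos_codegree r V H = Min ((\<lambda>e. card (nbhd V H e)) ` shadow r H)"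

definition gen_triangle :: "nat \<Rightarrow> nat set set" where
  "gen_triangle r = {{1..r}, insert (r+1) {1..r-1}, {r..2*r-1}}"

definition contains_copy :: "'b set set \<Rightarrow> 'a set set \<Rightarrow> bool" where
  "contains_copy F H \<longleftrightarrow> (\<exists>f. inj_on f (\<Union>F) \<and> (\<forall>E\<in>F. f ` E \<in> H))"

definition T_free :: "nat \<Rightarrow> 'a set set \<Rightarrow> bool" where
  "T_free r H \<longleftrightarrow> \<not> contains_copy (gen_triangle r) H"

definition Sigma_free :: "nat \<Rightarrow> 'a set set \<Rightarrow> bool" where
  "Sigma_free r H \<longleftrightarrow> \<not> (\<exists>A\<in>H. \<exists>B\<in>H. \<exists>C\<in>H.
      card (A \<inter> B) = r - 1 \<and> (A - B) \<union> (B - A) \<subseteq> C)"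

end

theory Submission
  imports Defs
begin

text \<open>Let \<open>A = S \<union> {a}\<close>, \<open>B = S \<union> {b}\<close> and \<open>a, b \<in> C\<close> be a \<open>\<Sigma>\<^sub>r\<close>-configuration. If \<open>C\<close>
  still meets \<open>S\<close> in some \<open>s\<close>, the shadow set \<open>C - {s}\<close> has at least \<open>r > |S|\<close> neighbours,
  so one of them, \<open>v\<close>, lies outside \<open>S\<close>; replacing \<open>C\<close> by \<open>C - {s} \<union> {v}\<close> keeps \<open>a, b\<close> and
  shrinks \<open>C \<inter> S\<close>. Once \<open>C \<inter> S = {}\<close>, the edges \<open>A, B, C\<close> form a copy of \<open>T\<^sub>r\<close>.\<close>

lemma finite_shadow:
  assumes "r_graph r V H"
  shows "finite (shadow r H)"
proof -
  have "shadow r H \<subseteq> Pow V"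
    using assms unfolding shadow_def r_graph_def by auto
  then show ?thesis
    using assms finite_subset unfolding r_graph_def by blast
qed

lemma edge_minus_vertex_in_shadow:
  assumes "r_graph r V H" "E \<in> H" "s \<in> E"
  shows "E - {s} \<in> shadow r H"
proof -
  have "finite E" "card E = r"
    using assms finite_subset unfolding r_graph_def by blast+
  then show ?thesis
    using assms(2,3) unfolding shadow_def by auto
qed

lemma min_pos_codegree_le_card_nbhd:
  assumes "r_graph r V H" "e \<in> shadow r H"
  shows "min_pos_codegree r V H \<le> card (nbhd V H e)"
  unfolding min_pos_codegree_def using assms finite_shadow by (intro Min_le) auto

lemma edge_swap_outside:
  assumes "r_graph r V H" "E \<in> H" "s \<in> E"
    and "finite S" "card S < min_pos_codegree r V H"
  obtains v where "v \<notin> S" "insert v (E - {s}) \<in> H"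
proof -
  have "card S < card (nbhd V H (E - {s}))"
    using assms min_pos_codegree_le_card_nbhd edge_minus_vertex_in_shadow
    by (meson order.strict_trans2)
  then have "\<not> nbhd V H (E - {s}) \<subseteq> S"
    using assms(4) card_mono leD by blast
  then show ?thesis
    using that unfolding nbhd_def by blast
qed

lemma edge_avoiding_small_set:
  assumes "r_graph r V H" "finite S" "card S < min_pos_codegree r V H"
    and "C \<in> H" "X \<subseteq> C" "X \<inter> S = {}"
  shows "\<exists>C'\<in>H. X \<subseteq> C' \<and> C' \<inter> S = {}"
  using assms(4,5)
proof (induction "card (C \<inter> S)" arbitrary: C)
  case 0
  then show ?case
    using assms(2) by auto
next
  case (Suc n)
  then obtain s where s: "s \<in> C \<inter> S"
    by (metis card.empty ex_in_conv nat.simps(3))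
  obtain v where v: "v \<notin> S" "insert v (C - {s}) \<in> H"
    using edge_swap_outside[OF assms(1) \<open>C \<in> H\<close> _ assms(2,3)] s by blast
  have "insert v (C - {s}) \<inter> S = (C \<inter> S) - {s}"
    using v(1) by auto
  then have "n = card (insert v (C - {s}) \<inter> S)"
    using Suc.hyps(2) s assms(2) by simp
  moreover have "X \<subseteq> insert v (C - {s})"
    using Suc.prems(2) s assms(6) by auto
  ultimately show ?case
    using Suc.hyps(1) v(2) by blast
qed

lemma edges_sharing_codim_one:
  assumes "finite A" "finite B" "card A = r" "card B = r" "card (A \<inter> B) = r - 1" "r \<ge> 1"
  obtains a b where "A = insert a (A \<inter> B)" "B = insert b (A \<inter> B)" "a \<notin> B" "b \<notin> A"
proof -
  have "card (A - B) = 1" "card (B - A) = 1"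
    using assms card_Diff_subset_Int[of A B] card_Diff_subset_Int[of B A]
    by (simp_all add: Int_commute)
  then obtain a b where "A - B = {a}" "B - A = {b}"
    by (meson card_1_singletonE)
  then show ?thesis
    using that by blast
qed

lemma gen_triangle_labelling:
  assumes "2 \<le> r" "finite S" "card S = r - 1" "finite C" "card C = r"
    and "a \<in> C" "b \<in> C" "a \<noteq> b" "C \<inter> S = {}"
  obtains f where "inj_on f {1..2*r-1}" "f ` {1..r-1} = S" "f r = a" "f (r+1) = b"
    "f ` {r+2..2*r-1} = C - {a,b}"
proof -
  obtain g where g: "bij_betw g {1..r-1} S"
    using finite_same_card_bij[of "{1..r-1}" S] assms(2,3) by auto
  have "card (C - {a,b}) = r - 2"
    using assms(4-8) by (simp add: card_Diff_subset)
  then obtain h where h: "bij_betw h {r+2..2*r-1} (C - {a,b})"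
    using finite_same_card_bij[of "{r+2..2*r-1}" "C - {a,b}"] assms(1,4) by auto
  define f where
    "f i = (if i \<le> r - 1 then g i else if i = r then a else if i = r + 1 then b else h i)" for i
  have fr: "f r = a" "f (r+1) = b"
    using assms(1) unfolding f_def by auto
  have fS: "f ` {1..r-1} = S"
    using g unfolding bij_betw_def by (metis (no_types, lifting) atLeastAtMost_iff f_def image_cong)
  have fC: "f ` {r+2..2*r-1} = C - {a,b}"
  proof -
    have "f ` {r+2..2*r-1} = h ` {r+2..2*r-1}"
      by (rule image_cong) (auto simp: f_def)
    then show ?thesis
      using h unfolding bij_betw_def by simp
  qed
  have "{1..2*r-1} = {1..r-1} \<union> {r, r+1} \<union> {r+2..2*r-1}"
    using assms(1) by auto
  then have "f ` {1..2*r-1} = S \<union> C"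
    using fS fC fr assms(6,7) by (auto simp only: image_Un)
  then have "card (f ` {1..2*r-1}) = card {1..2*r-1}"
    using assms(1-5,9) by (simp add: card_Un_disjoint Int_commute)
  then have "inj_on f {1..2*r-1}"
    by (simp add: eq_card_imp_inj_on)
  then show ?thesis
    using that fS fr fC by blast
qed

lemma contains_gen_triangle:
  assumes "2 \<le> r" "finite S" "card S = r - 1" "finite C" "card C = r"
    and "a \<in> C" "b \<in> C" "a \<noteq> b" "C \<inter> S = {}"
    and "insert a S \<in> H" "insert b S \<in> H" "C \<in> H"
  shows "contains_copy (gen_triangle r) H"
proof -
  obtain f where f: "inj_on f {1..2*r-1}" "f ` {1..r-1} = S" "f r = a" "f (r+1) = b"
    "f ` {r+2..2*r-1} = C - {a,b}"
    using gen_triangle_labelling[OF assms(1-9)] by blast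
  have "{1..r} = insert r {1..r-1}" "{r..2*r-1} = insert r (insert (r+1) {r+2..2*r-1})"
    using assms(1) by auto
  then have "f ` {1..r} = insert a S" "f ` insert (r+1) {1..r-1} = insert b S"
    "f ` {r..2*r-1} = C"
    using f assms(6,7) by auto
  moreover have "\<Union>(gen_triangle r) = {1..2*r-1}"
    unfolding gen_triangle_def using assms(1) by auto
  ultimately show ?thesis
    unfolding contains_copy_def gen_triangle_def using f(1) assms(10-12) by auto
qed

theorem proposition2p1:
  fixes r :: nat and V :: "'a set" and H :: "'a set set"
  assumes "r \<ge> 3"
    and "r_graph r V H"
    and "T_free r H"
    and "min_pos_codegree r V H \<ge> r"
  shows "Sigma_free r H"
  unfolding Sigma_free_def
proof clarify
  fix A B C0
  assume edges: "A \<in> H" "B \<in> H" "C0 \<in> H" and AB: "card (A \<inter> B) = r - 1"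
    and C0: "A - B \<union> (B - A) \<subseteq> C0"
  have fin: "\<And>E. E \<in> H \<Longrightarrow> finite E \<and> card E = r"
    using assms(2) finite_subset unfolding r_graph_def by blast
  define S where "S = A \<inter> B"
  obtain a b where ab: "A = insert a S" "B = insert b S" "a \<notin> B" "b \<notin> A"
    using edges_sharing_codim_one[of A B r] fin edges AB assms(1) unfolding S_def by auto
  have S: "finite S" "card S = r - 1" "card S < min_pos_codegree r V H"
    using fin edges(1) AB assms(1,4) unfolding S_def by auto
  have "{a, b} \<subseteq> C0" "{a, b} \<inter> S = {}"
    using C0 ab unfolding S_def by blast+
  then obtain C where C: "C \<in> H" "{a, b} \<subseteq> C" "C \<inter> S = {}"
    using edge_avoiding_small_set[OF assms(2) S(1,3) edges(3)] by blast
  have "a \<noteq> b"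
    using ab unfolding S_def by blast
  then have "contains_copy (gen_triangle r) H"
    using contains_gen_triangle[OF _ S(1,2) _ _ _ _ _ C(3)] assms(1) fin[OF C(1)] C(1,2)
      edges(1,2) ab(1,2) by auto
  then show False
    using assms(3) unfolding T_free_def by blast
qed

end
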